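(* Let $\vec H$ be a directed graph on $k$ vertices with $\chi(\vec H)\le p$, and let $0<\delta<\frac1{8k}$. There exists $n_0$, depending only on $\vec H$ (and $\delta$), such that for every $n>n_0$ the following holds. Let $G$ be a $p$-partite graph on $n$ vertices with parts $V_1,\dots,V_p$, each of size at least $10^k\delta n$, let $\vec G$ be a relevant orientation of $G$ (with respect to this partition and $\delta$), and let $c:V(\vec H)\to[p]$ be a proper colouring of $\vec H$. Then there is an embedding of $\vec H$ into $\vec G$ (as a directed subgraph) such that each vertex $v$ of $\vec H$ is mapped into $V_{c(v)}$.
   Context: $\chi(\vec H)$ is the chromatic number of the underlying graph of $\vec H$; a proper colouring of $\vec H$ is one of its underlying graph. Given a partition $V(G)=V_1\cup\dots\cup V_p$ and $\delta>0$, an orientation $\vec G$ of $G$ is relevant if for every $i\neq j$ and all $X_1\subseteq V_i$, $X_2\subseteq V_j$ with $|X_1|,|X_2|>2\delta n$, there are at least $|X_1||X_2|/10$ edges of $\vec G$ directed from $X_1$ to $X_2$. *)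

theory Defs
  imports Complex_Main
begin

definition oriented_graph :: "'a set \<Rightarrow> ('a \<times> 'a) set \<Rightarrow> bool" where
  "oriented_graph VH AH \<longleftrightarrow> finite VH \<and> AH \<subseteq> VH \<times> VH
     \<and> (\<forall>x. (x, x) \<notin> AH) \<and> (\<forall>x y. (x, y) \<in> AH \<longrightarrow> (y, x) \<notin> AH)"

definition proper_colouring :: "'a set \<Rightarrow> ('a \<times> 'a) set \<Rightarrow> nat \<Rightarrow> ('a \<Rightarrow> nat) \<Rightarrow> bool" where
  "proper_colouring VH AH m c \<longleftrightarrow> (\<forall>v\<in>VH. c v < m) \<and> (\<forall>(u, v)\<in>AH. c u \<noteq> c v)"

definition chromatic_number :: "'a set \<Rightarrow> ('a \<times> 'a) set \<Rightarrow> nat" where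
  "chromatic_number VH AH = (LEAST m. \<exists>c. proper_colouring VH AH m c)"

definition p_partite_graph :: "'v set \<Rightarrow> ('v \<times> 'v) set \<Rightarrow> nat \<Rightarrow> (nat \<Rightarrow> 'v set) \<Rightarrow> bool" where
  "p_partite_graph V E p Vs \<longleftrightarrow> finite V \<and> E \<subseteq> V \<times> V \<and> sym E \<and> (\<forall>x. (x, x) \<notin> E)
     \<and> (\<Union>i<p. Vs i) = V
     \<and> (\<forall>i<p. \<forall>j<p. i \<noteq> j \<longrightarrow> Vs i \<inter> Vs j = {})
     \<and> (\<forall>i<p. \<forall>x\<in>Vs i. \<forall>y\<in>Vs i. (x, y) \<notin> E)"

definition orientation_of :: "('v \<times> 'v) set \<Rightarrow> ('v \<times> 'v) set \<Rightarrow> bool" where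
  "orientation_of E A \<longleftrightarrow> A \<subseteq> E \<and> (\<forall>x y. (x, y) \<in> E \<longrightarrow> ((x, y) \<in> A \<longleftrightarrow> (y, x) \<notin> A))"

definition relevant :: "('v \<times> 'v) set \<Rightarrow> nat \<Rightarrow> (nat \<Rightarrow> 'v set) \<Rightarrow> real \<Rightarrow> nat \<Rightarrow> bool" where
  "relevant A p Vs \<delta> n \<longleftrightarrow>
     (\<forall>i<p. \<forall>j<p. i \<noteq> j \<longrightarrow> (\<forall>X1 X2. X1 \<subseteq> Vs i \<longrightarrow> X2 \<subseteq> Vs j
        \<longrightarrow> real (card X1) > 2 * \<delta> * real n \<longrightarrow> real (card X2) > 2 * \<delta> * real n
        \<longrightarrow> real (card (A \<inter> (X1 \<times> X2))) \<ge> real (card X1) * real (card X2) / 10))"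

end

theory Submission
  imports Defs
begin

text \<open>Embed the vertices of H greedily, one at a time. Each vertex w not yet embedded
  keeps a candidate set C w in its part V_c(w), all of whose elements are correctly joined to
  the images of the embedded neighbours of w, and C w has at least 10^(k - s) \<delta> n elements
  after s steps. To embed u, relevance shows that for each unembedded neighbour w of u at most
  2\<delta>n vertices of C u send (or receive) fewer than |C w|/10 arcs to (from) C w. These,
  together with the s < k < 8\<delta>n used images, are fewer than (2(k - s) + 8)\<delta>n \<le> 10^(k - s)\<delta>n
  \<le> |C u| vertices, so a good image x exists, and restricting every C w to the neighbours of x
  divides its size by at most 10.\<close>

lemma relevant_few_low_out_degree:
  assumes rel: "relevant A p Vs \<delta> n" and ij: "i < p" "j < p" "i \<noteq> j" and "0 \<le> \<delta>"
    and B: "B \<subseteq> Vs i" and X: "X \<subseteq> Vs j" and X_large: "real (card X) > 2 * \<delta> * real n"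
    and low: "\<forall>x\<in>B. real (card {y\<in>X. (x, y) \<in> A}) < real (card X) / 10"
  shows "real (card B) \<le> 2 * \<delta> * real n"
proof (rule ccontr)
  assume "\<not> ?thesis"
  hence B_large: "real (card B) > 2 * \<delta> * real n" by simp
  have "0 \<le> 2 * \<delta> * real n" using \<open>0 \<le> \<delta>\<close> by simp
  hence "card B > 0" "card X > 0" using B_large X_large by linarith+
  hence fin: "finite B" "finite X" by (auto simp: card_gt_0_iff)
  have "A \<inter> (B \<times> X) = (SIGMA x:B. {y\<in>X. (x, y) \<in> A})" by auto
  hence "real (card (A \<inter> (B \<times> X))) = (\<Sum>x\<in>B. real (card {y\<in>X. (x, y) \<in> A}))"
    using fin by simp
  also have "\<dots> < (\<Sum>x\<in>B. real (card X) / 10)"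
    using fin \<open>card B > 0\<close> low by (intro sum_strict_mono) auto
  also have "\<dots> = real (card B) * real (card X) / 10" by simp
  also have "\<dots> \<le> real (card (A \<inter> (B \<times> X)))"
    using rel ij B X B_large X_large unfolding relevant_def by blast
  finally show False by simp
qed

lemma relevant_converse:
  assumes "relevant A p Vs \<delta> n" shows "relevant (converse A) p Vs \<delta> n"
  unfolding relevant_def
proof (intro allI impI)
  fix i j X1 X2
  assume h: "i < p" "j < p" "i \<noteq> j" "X1 \<subseteq> Vs i" "X2 \<subseteq> Vs j"
    "2 * \<delta> * real n < real (card X1)" "2 * \<delta> * real n < real (card X2)"
  have "converse A \<inter> (X1 \<times> X2) = converse (A \<inter> (X2 \<times> X1))" by auto
  hence "card (converse A \<inter> (X1 \<times> X2)) = card (A \<inter> (X2 \<times> X1))" by simp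
  moreover have "real (card X2) * real (card X1) / 10 \<le> real (card (A \<inter> (X2 \<times> X1)))"
    using assms h unfolding relevant_def by blast
  ultimately show "real (card X1) * real (card X2) / 10 \<le> real (card (converse A \<inter> (X1 \<times> X2)))"
    by (simp add: mult.commute)
qed

lemma relevant_few_low_in_degree:
  assumes "relevant A p Vs \<delta> n" and "i < p" "j < p" "i \<noteq> j" and "0 \<le> \<delta>"
    and "B \<subseteq> Vs i" and "X \<subseteq> Vs j" and "real (card X) > 2 * \<delta> * real n"
    and "\<forall>x\<in>B. real (card {y\<in>X. (y, x) \<in> A}) < real (card X) / 10"
  shows "real (card B) \<le> 2 * \<delta> * real n"
  using relevant_few_low_out_degree[OF relevant_converse, of A p Vs \<delta> n i j B X] assms by simp

lemma linear_le_power_ten: "1 \<le> m \<Longrightarrow> 2 * real m + 8 \<le> (10::real) ^ m"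
  by (induction m rule: dec_induct) auto

locale greedy_embedding =
  fixes VH :: "'h set" and AH :: "('h \<times> 'h) set" and k :: nat and \<delta> :: real
    and p :: nat and n :: nat and Vs :: "nat \<Rightarrow> nat set" and A :: "(nat \<times> nat) set"
    and c :: "'h \<Rightarrow> nat"
  assumes oriented: "oriented_graph VH AH" and card_VH: "card VH = k" and \<delta>_pos: "0 < \<delta>"
    and n_large: "real k < 8 * \<delta> * real n"
    and finite_parts: "\<And>i. i < p \<Longrightarrow> finite (Vs i)"
    and parts_large: "\<And>i. i < p \<Longrightarrow> 10 ^ k * \<delta> * real n \<le> real (card (Vs i))"
    and A_relevant: "relevant A p Vs \<delta> n"
    and colouring: "proper_colouring VH AH p c"
begin

definition partial_embedding :: "'h set \<Rightarrow> ('h \<Rightarrow> nat) \<Rightarrow> ('h \<Rightarrow> nat set) \<Rightarrow> bool" where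
  "partial_embedding S f C \<longleftrightarrow> S \<subseteq> VH \<and> inj_on f S \<and> (\<forall>v\<in>S. f v \<in> Vs (c v))
     \<and> (\<forall>(a, b)\<in>AH. a \<in> S \<longrightarrow> b \<in> S \<longrightarrow> (f a, f b) \<in> A)
     \<and> (\<forall>w\<in>VH - S. C w \<subseteq> Vs (c w) \<and> 10 ^ (k - card S) * \<delta> * real n \<le> real (card (C w))
          \<and> (\<forall>v\<in>S. \<forall>y\<in>C w. ((v, w) \<in> AH \<longrightarrow> (f v, y) \<in> A) \<and> ((w, v) \<in> AH \<longrightarrow> (y, f v) \<in> A)))"

definition candidates_after :: "'h \<Rightarrow> nat \<Rightarrow> 'h \<Rightarrow> nat set \<Rightarrow> nat set" where
  "candidates_after u x w Y =
     (if (u, w) \<in> AH then {y\<in>Y. (x, y) \<in> A}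
      else if (w, u) \<in> AH then {y\<in>Y. (y, x) \<in> A} else Y)"

lemma finite_VH: "finite VH"
  using oriented unfolding oriented_graph_def by blast

lemma colour_less: "v \<in> VH \<Longrightarrow> c v < p"
  using colouring unfolding proper_colouring_def by blast

lemma candidates_after_subset: "candidates_after u x w Y \<subseteq> Y"
  unfolding candidates_after_def by auto

lemma card_atypical_le:
  assumes "u \<in> VH" "w \<in> VH" and U: "U \<subseteq> Vs (c u)" and Y: "Y \<subseteq> Vs (c w)"
    and Y_large: "real (card Y) > 2 * \<delta> * real n"
  shows "real (card {x\<in>U. real (card (candidates_after u x w Y)) < real (card Y) / 10})
           \<le> 2 * \<delta> * real n"
proof -
  have parts: "c u < p" "c w < p" using assms colour_less by auto
  have proper: "c u \<noteq> c w" if "(u, w) \<in> AH \<or> (w, u) \<in> AH"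
    using that colouring unfolding proper_colouring_def by fastforce
  consider "(u, w) \<in> AH" | "(u, w) \<notin> AH" "(w, u) \<in> AH" | "(u, w) \<notin> AH" "(w, u) \<notin> AH"
    by blast
  then show ?thesis
  proof cases
    case 1
    then show ?thesis unfolding candidates_after_def
      using proper \<delta>_pos Y_large U Y
      by (intro relevant_few_low_out_degree[OF A_relevant parts]) auto
  next
    case 2
    then show ?thesis unfolding candidates_after_def
      using proper \<delta>_pos Y_large U Y
      by (intro relevant_few_low_in_degree[OF A_relevant parts]) auto
  next
    case 3
    then show ?thesis unfolding candidates_after_def using \<delta>_pos by simp
  qed
qed

lemma exists_typical_image:
  assumes PE: "partial_embedding S f C" and u: "u \<in> VH - S"
  shows "\<exists>x\<in>C u. x \<notin> f ` S \<and> (\<forall>w\<in>VH - S - {u}.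
           real (card (C w)) / 10 \<le> real (card (candidates_after u x w (C w))))"
proof -
  define m where "m = k - card S"
  have S: "S \<subseteq> VH" and C: "\<And>w. w \<in> VH - S \<Longrightarrow> C w \<subseteq> Vs (c w)"
    and C_large: "\<And>w. w \<in> VH - S \<Longrightarrow> 10 ^ m * \<delta> * real n \<le> real (card (C w))"
    using PE unfolding partial_embedding_def m_def by blast+
  have fin_S: "finite S" using S finite_VH finite_subset by blast
  have card_rest: "card (VH - S) = m"
    using card_Diff_subset[OF fin_S S] card_VH unfolding m_def by simp
  hence "1 \<le> m" using u finite_VH card_gt_0_iff[of "VH - S"] by force
  have \<delta>n_pos: "0 < \<delta> * real n" using n_large of_nat_0_le_iff[of k] by linarith
  have "(10::real) ^ 1 \<le> 10 ^ m" using \<open>1 \<le> m\<close> by (intro power_increasing) auto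
  hence C_gt: "2 * \<delta> * real n < real (card (C w))" if "w \<in> VH - S" for w
    using C_large[OF that] \<delta>n_pos mult_right_mono[of 10 "10 ^ m" "\<delta> * real n"]
    by (simp add: mult.assoc)
  define atypical where "atypical w =
    {x\<in>C u. real (card (candidates_after u x w (C w))) < real (card (C w)) / 10}" for w
  define Bad where "Bad = (\<Union>w\<in>VH - S - {u}. atypical w)"
  have "real (card Bad) \<le> (\<Sum>w\<in>VH - S - {u}. real (card (atypical w)))"
    unfolding Bad_def of_nat_sum[symmetric] of_nat_le_iff using finite_VH
    by (intro card_UN_le) simp
  also have "\<dots> \<le> (\<Sum>w\<in>VH - S - {u}. 2 * \<delta> * real n)"
    unfolding atypical_def using u C C_gt
    by (intro sum_mono card_atypical_le) auto
  also have "\<dots> = (real m - 1) * (2 * \<delta> * real n)"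
    using card_rest u finite_VH \<open>1 \<le> m\<close> by (simp add: card_Diff_singleton of_nat_diff)
  finally have card_Bad: "real (card Bad) \<le> (real m - 1) * (2 * \<delta> * real n)" .
  have "real (card (f ` S)) < 8 * \<delta> * real n"
    using card_image_le[OF fin_S, of f] card_mono[OF finite_VH S] card_VH n_large by linarith
  moreover have "(2 * real m + 8) * (\<delta> * real n) \<le> 10 ^ m * (\<delta> * real n)"
    using linear_le_power_ten[OF \<open>1 \<le> m\<close>] \<delta>n_pos by (intro mult_right_mono) auto
  hence "(2 * real m + 8) * (\<delta> * real n) \<le> real (card (C u))"
    using C_large[OF u] by (simp add: mult.assoc)
  ultimately have "real (card Bad) + real (card (f ` S)) < real (card (C u))"
    using card_Bad by (simp add: algebra_simps)
  moreover have "finite (Bad \<union> f ` S)"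
    using C[OF u] finite_parts[OF colour_less] u fin_S
    unfolding Bad_def atypical_def by (auto intro: finite_subset)
  ultimately have "\<not> C u \<subseteq> Bad \<union> f ` S"
    using card_mono[of "Bad \<union> f ` S" "C u"] card_Un_le[of Bad "f ` S"] by linarith
  then obtain x where "x \<in> C u" "x \<notin> Bad" "x \<notin> f ` S" by blast
  then show ?thesis unfolding Bad_def atypical_def by (auto simp: not_less)
qed

lemma partial_embedding_insert:
  assumes PE: "partial_embedding S f C" and u: "u \<in> VH - S"
    and x: "x \<in> C u" "x \<notin> f ` S"
    and typical: "\<forall>w\<in>VH - S - {u}.
       real (card (C w)) / 10 \<le> real (card (candidates_after u x w (C w)))"
  shows "partial_embedding (insert u S) (f(u := x)) (\<lambda>w. candidates_after u x w (C w))"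
proof -
  define f' where "f' = f(u := x)"
  have S: "S \<subseteq> VH" and inj: "inj_on f S" and f_parts: "\<forall>v\<in>S. f v \<in> Vs (c v)"
    and arcs: "\<forall>(a, b)\<in>AH. a \<in> S \<longrightarrow> b \<in> S \<longrightarrow> (f a, f b) \<in> A"
    and C: "\<And>w. w \<in> VH - S \<Longrightarrow> C w \<subseteq> Vs (c w)"
    and C_large: "\<And>w. w \<in> VH - S \<Longrightarrow> 10 ^ (k - card S) * \<delta> * real n \<le> real (card (C w))"
    and C_compat: "\<And>w v y. w \<in> VH - S \<Longrightarrow> v \<in> S \<Longrightarrow> y \<in> C w \<Longrightarrow>
       ((v, w) \<in> AH \<longrightarrow> (f v, y) \<in> A) \<and> ((w, v) \<in> AH \<longrightarrow> (y, f v) \<in> A)"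
    using PE unfolding partial_embedding_def by blast+
  have "finite S" using S finite_VH finite_subset by blast
  have "card S < k" using psubset_card_mono[OF finite_VH, of S] S u card_VH by blast
  hence card_insert: "k - card (insert u S) = k - card S - 1"
    using \<open>finite S\<close> u by simp
  have loopless: "(v, v) \<notin> AH" and asym: "(a, b) \<in> AH \<Longrightarrow> (b, a) \<notin> AH" for v a b
    using oriented unfolding oriented_graph_def by blast+
  have arcs': "(f' a, f' b) \<in> A"
    if "(a, b) \<in> AH" "a \<in> insert u S" "b \<in> insert u S" for a b
    using that arcs loopless C_compat[OF u _ x(1)] unfolding f'_def by (cases "a = u"; cases "b = u") auto
  have large': "10 ^ (k - card (insert u S)) * \<delta> * real n
                  \<le> real (card (candidates_after u x w (C w)))" if w: "w \<in> VH - insert u S" for w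
  proof -
    have "(10::real) ^ (k - card S) = 10 * 10 ^ (k - card S - 1)"
      using \<open>card S < k\<close> power_Suc[of "10::real" "k - card S - 1"] by (simp add: Suc_diff_Suc)
    hence "10 ^ (k - card (insert u S)) * \<delta> * real n = 10 ^ (k - card S) * \<delta> * real n / 10"
      unfolding card_insert by simp
    also have "\<dots> \<le> real (card (C w)) / 10" using C_large w by simp
    also have "\<dots> \<le> real (card (candidates_after u x w (C w)))" using typical w by blast
    finally show ?thesis .
  qed
  have compat': "((v, w) \<in> AH \<longrightarrow> (f' v, y) \<in> A) \<and> ((w, v) \<in> AH \<longrightarrow> (y, f' v) \<in> A)"
    if "w \<in> VH - insert u S" "v \<in> insert u S" "y \<in> candidates_after u x w (C w)" for w v y
  proof (cases "v = u")
    case True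
    then show ?thesis using that(3) asym unfolding f'_def candidates_after_def by auto
  next
    case False
    then show ?thesis
      using that C_compat[of w v y] candidates_after_subset[of u x w "C w"] unfolding f'_def by auto
  qed
  have "inj_on f' (insert u S)"
    using inj x(2) u unfolding f'_def by (auto simp: inj_on_def)
  moreover have "\<forall>v\<in>insert u S. f' v \<in> Vs (c v)"
    using f_parts C[OF u] x(1) u unfolding f'_def by auto
  moreover have "candidates_after u x w (C w) \<subseteq> Vs (c w)" if "w \<in> VH - insert u S" for w
    using C[of w] that candidates_after_subset by blast
  ultimately show ?thesis
    unfolding partial_embedding_def f'_def[symmetric]
    using S u arcs' large' compat' by auto
qed

lemma partial_embedding_empty: "partial_embedding {} f (\<lambda>w. Vs (c w))"
  using parts_large colour_less by (auto simp: partial_embedding_def)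

lemma partial_embedding_of_card: "s \<le> k \<Longrightarrow> \<exists>S f C. partial_embedding S f C \<and> card S = s"
proof (induction s)
  case 0
  then show ?case using partial_embedding_empty by fastforce
next
  case (Suc s)
  then obtain S f C where PE: "partial_embedding S f C" and "card S = s" by auto
  have "S \<subseteq> VH" using PE unfolding partial_embedding_def by blast
  moreover have "S \<noteq> VH" using \<open>card S = s\<close> Suc.prems card_VH by auto
  ultimately obtain u where u: "u \<in> VH - S" by blast
  from exists_typical_image[OF PE u] obtain x where "x \<in> C u" "x \<notin> f ` S"
    "\<forall>w\<in>VH - S - {u}. real (card (C w)) / 10 \<le> real (card (candidates_after u x w (C w)))"
    by blast
  from partial_embedding_insert[OF PE u this] have
    "partial_embedding (insert u S) (f(u := x)) (\<lambda>w. candidates_after u x w (C w))" .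
  moreover have "card (insert u S) = Suc s"
    using u \<open>card S = s\<close> \<open>S \<subseteq> VH\<close> finite_VH by (simp add: finite_subset)
  ultimately show ?case by blast
qed

lemma embedding_exists:
  "\<exists>f. inj_on f VH \<and> (\<forall>v\<in>VH. f v \<in> Vs (c v)) \<and> (\<forall>(u, v)\<in>AH. (f u, f v) \<in> A)"
proof -
  obtain S f C where PE: "partial_embedding S f C" and "card S = k"
    using partial_embedding_of_card by blast
  have "S \<subseteq> VH" using PE unfolding partial_embedding_def by blast
  with \<open>card S = k\<close> have "S = VH" using card_subset_eq[OF finite_VH] card_VH by simp
  moreover have "AH \<subseteq> VH \<times> VH" using oriented unfolding oriented_graph_def by blast
  ultimately show ?thesis using PE unfolding partial_embedding_def by fast
qed

end

theorem mainTheorem10: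
  fixes VH :: "'h set" and AH :: "('h \<times> 'h) set" and k :: nat and \<delta> :: real
  assumes "oriented_graph VH AH" and "card VH = k"
    and "0 < \<delta>" and "\<delta> < 1 / (8 * real k)"
  shows "\<exists>n0::nat. \<forall>p::nat. \<forall>n > n0. \<forall>(V :: nat set) (E :: (nat \<times> nat) set) Vs A c.
           chromatic_number VH AH \<le> p
           \<longrightarrow> card V = n
           \<longrightarrow> p_partite_graph V E p Vs
           \<longrightarrow> (\<forall>i<p. real (card (Vs i)) \<ge> 10 ^ k * \<delta> * real n)
           \<longrightarrow> orientation_of E A
           \<longrightarrow> relevant A p Vs \<delta> n
           \<longrightarrow> proper_colouring VH AH p c
           \<longrightarrow> (\<exists>f. inj_on f VH \<and> (\<forall>v\<in>VH. f v \<in> Vs (c v))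
                   \<and> (\<forall>(u, v)\<in>AH. (f u, f v) \<in> A))"
proof (intro exI[of _ "nat \<lceil>real k / (8 * \<delta>)\<rceil>"] allI impI)
  fix p n :: nat and V :: "nat set" and E :: "(nat \<times> nat) set" and Vs :: "nat \<Rightarrow> nat set"
    and A :: "(nat \<times> nat) set" and c :: "'h \<Rightarrow> nat"
  assume "nat \<lceil>real k / (8 * \<delta>)\<rceil> < n" and partite: "p_partite_graph V E p Vs"
    and hyps: "\<forall>i<p. real (card (Vs i)) \<ge> 10 ^ k * \<delta> * real n"
      "relevant A p Vs \<delta> n" "proper_colouring VH AH p c"
  \<comment> \<open>Only n > k/(8\<delta>) is used.\<close>
  then have "real k / (8 * \<delta>) < real n" by linarith
  then have "real k < 8 * \<delta> * real n"
    using \<open>0 < \<delta>\<close> by (simp add: pos_divide_less_eq mult.commute)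
  moreover have "finite (Vs i)" if "i < p" for i
  proof -
    have "Vs i \<subseteq> V" "finite V" using partite that unfolding p_partite_graph_def by blast+
    then show ?thesis by (rule finite_subset)
  qed
  ultimately interpret greedy_embedding VH AH k \<delta> p n Vs A c
    using assms hyps by unfold_locales auto
  show "\<exists>f. inj_on f VH \<and> (\<forall>v\<in>VH. f v \<in> Vs (c v)) \<and> (\<forall>(u, v)\<in>AH. (f u, f v) \<in> A)"
    by (rule embedding_exists)
qed

end
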